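(* Let $r\in(0,1)$ be such that $G_m'(t)<0$ for all $t\in[-r,r]$ (such $r$ exists). Then for $P$-a.e. $\omega$ there exists $N_5(\omega)\in\mathbb N$ such that for every $n>N_5(\omega)$, the set $C_{Q_n(\omega)}\cap[-r,r]$ consists of exactly one point.
   Context: Fix $m>1/2$. Let $c_m:=\left(\int_{\mathbb R}(1+x^2)^{-m}dx\right)^{-1}$ and $\nu_m(dx):=c_m(1+x^2)^{-m}dx$. Let $(X_n)_{n\ge1}$ be i.i.d. random variables on $(\Omega,\mathcal F,P)$ with law $\nu_m$. Let $L_n(t):=\frac1n\sum_{i=1}^n\log(1+(X_i-t)^2)$ and $C_{Q_n(\omega)}:=\{t\in\mathbb R: L_n(t)(\omega)=\min_{s\in\mathbb R}L_n(s)(\omega)\}$. Let $D(x,t):=\dfrac{x-t}{1+(x-t)^2}$ and $G_m(t):=\int_{\mathbb R}D(x,t)\,\nu_m(dx)$. *)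

theory Defs
  imports "HOL-Probability.Probability"
begin

definition c_m :: "real \<Rightarrow> real" where
  "c_m m = 1 / (LINT x|lborel. (1 + x\<^sup>2) powr (- m))"

definition nu_m :: "real \<Rightarrow> real measure" where
  "nu_m m = density lborel (\<lambda>x. ennreal (c_m m * (1 + x\<^sup>2) powr (- m)))"

definition D :: "real \<Rightarrow> real \<Rightarrow> real" where
  "D x t = (x - t) / (1 + (x - t)\<^sup>2)"

definition G_m :: "real \<Rightarrow> real \<Rightarrow> real" where
  "G_m m t = (LINT x|nu_m m. D x t)"

definition L_n :: "(nat \<Rightarrow> 'a \<Rightarrow> real) \<Rightarrow> nat \<Rightarrow> real \<Rightarrow> 'a \<Rightarrow> real" where
  "L_n X n t \<omega> = (1 / real n) * (\<Sum>i=1..n. ln (1 + (X i \<omega> - t)\<^sup>2))"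

definition C_Q :: "(nat \<Rightarrow> 'a \<Rightarrow> real) \<Rightarrow> nat \<Rightarrow> 'a \<Rightarrow> real set" where
  "C_Q X n \<omega> = {t. \<forall>s. L_n X n t \<omega> \<le> L_n X n s \<omega>}"

end

theory Submission
  imports Defs
begin

text \<open>Since \<open>L_n' = -2 S_n\<close> with \<open>S_n(t)\<close> the sample mean of \<open>D(X_i, t)\<close>, everything reduces to the signs
  of \<open>S_n\<close> and \<open>S_n'\<close>. Their means are \<open>G_m\<close> and \<open>G_m'\<close>, where \<open>t G_m(t) < 0\<close> for \<open>t \<noteq> 0\<close> by the symmetry
  and unimodality of \<open>nu_m\<close>, and \<open>G_m' < 0\<close> on \<open>[-r, r]\<close> by hypothesis. A law of large numbers that is
  uniform over compact intervals (Hoeffding's inequality and Borel--Cantelli on a finite net, glued by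
  Lipschitz continuity in \<open>t\<close>) therefore makes, almost surely and for all large \<open>n\<close>, \<open>S_n'\<close> negative on
  \<open>[-r, r]\<close>, \<open>S_n\<close> negative on \<open>[r, T]\<close> and positive on \<open>[-T, -r]\<close>; the same law for the indicator of
  \<open>[-K, K]\<close> gives \<open>L_n(t) > L_n(0)\<close> for \<open>|t| \<ge> T\<close>. So \<open>L_n\<close> attains its minimum, only inside \<open>[-r, r]\<close>,
  where \<open>L_n'\<close> is strictly increasing and hence vanishes only once.\<close>

section \<open>The function \<open>D\<close> and its derivatives\<close>

definition D' :: "real \<Rightarrow> real" where
  "D' u = (u\<^sup>2 - 1) / (1 + u\<^sup>2)\<^sup>2"

definition D'' :: "real \<Rightarrow> real" where
  "D'' u = 2 * u * (3 - u\<^sup>2) / (1 + u\<^sup>2) ^ 3"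

lemma one_plus_sq_pos [simp]: "0 < 1 + (u::real)\<^sup>2"
  by (simp add: add_pos_nonneg)

lemma one_plus_sq_nonzero [simp]: "1 + (u::real)\<^sup>2 \<noteq> 0"
  using one_plus_sq_pos[of u] by linarith

lemma abs_le_one_plus_sq: "\<bar>u::real\<bar> \<le> 1 + u\<^sup>2"
proof -
  have "0 \<le> (\<bar>u\<bar> - 1)\<^sup>2" by simp
  then show ?thesis by (simp add: power2_eq_square algebra_simps)
qed

lemma D_measurable [measurable]: "(\<lambda>x. D x t) \<in> borel_measurable borel"
  by (simp add: D_def)

lemma abs_D_le_1: "\<bar>D x t\<bar> \<le> 1"
  using abs_le_one_plus_sq[of "x - t"] by (simp add: D_def abs_divide)

lemma abs_D'_le_1: "\<bar>D' u\<bar> \<le> 1"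
proof -
  have "\<bar>u\<^sup>2 - 1\<bar> \<le> 1 + u\<^sup>2" by (simp add: abs_le_iff)
  also have "\<dots> \<le> (1 + u\<^sup>2)\<^sup>2" by (rule self_le_power) auto
  finally show ?thesis by (simp add: D'_def abs_divide)
qed

lemma abs_D''_le_6: "\<bar>D'' u\<bar> \<le> 6"
proof -
  have "\<bar>2 * u * (3 - u\<^sup>2)\<bar> = 2 * (\<bar>u\<bar> * \<bar>3 - u\<^sup>2\<bar>)" by (simp add: abs_mult)
  also have "\<dots> \<le> 2 * ((1 + u\<^sup>2) * (3 * (1 + u\<^sup>2)))"
    using abs_le_one_plus_sq[of u] by (intro mult_left_mono mult_mono) (auto simp: abs_le_iff)
  also have "\<dots> = 6 * (1 + u\<^sup>2)\<^sup>2" by (simp add: power2_eq_square)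
  also have "\<dots> \<le> 6 * (1 + u\<^sup>2) ^ 3" by (intro mult_left_mono power_increasing) auto
  finally show ?thesis by (simp add: D''_def abs_divide divide_le_eq)
qed

lemma has_real_derivative_D: "((\<lambda>t. D x t) has_real_derivative D' (x - t)) (at t)"
  unfolding D_def D'_def
  by (rule derivative_eq_intros refl | simp)+
     (simp add: divide_simps, simp add: algebra_simps power2_eq_square)

lemma has_real_derivative_D': "(D' has_real_derivative D'' u) (at u)"
  unfolding D'_def[abs_def] D''_def
  by (rule derivative_eq_intros refl | simp)+
     (simp add: divide_simps, simp add: algebra_simps eval_nat_numeral)

lemma D_lipschitz: "\<bar>D x s - D x t\<bar> \<le> \<bar>s - t\<bar>"
  using field_differentiable_bound[OF convex_UNIV, of "\<lambda>t. D x t" "\<lambda>t. D' (x - t)" 1 s t]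
    has_real_derivative_D abs_D'_le_1 by simp

lemma D'_lipschitz: "\<bar>D' (x - s) - D' (x - t)\<bar> \<le> 6 * \<bar>s - t\<bar>"
  using field_differentiable_bound[OF convex_UNIV, of D' D'' 6 "x - s" "x - t"]
    has_real_derivative_D' abs_D''_le_6 by (simp add: abs_minus_commute)

lemma has_real_derivative_ln_one_plus_sq:
  "((\<lambda>t. ln (1 + (x - t)\<^sup>2)) has_real_derivative -2 * D x t) (at t)"
  unfolding D_def
  by (rule derivative_eq_intros refl | simp)+

definition sample_mean :: "(real \<Rightarrow> real) \<Rightarrow> (nat \<Rightarrow> 'a \<Rightarrow> real) \<Rightarrow> nat \<Rightarrow> 'a \<Rightarrow> real" where
  "sample_mean g X n \<omega> = (\<Sum>i=1..n. g (X i \<omega>)) / real n"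

lemma L_n_eq_sample_mean: "L_n X n t \<omega> = sample_mean (\<lambda>x. ln (1 + (x - t)\<^sup>2)) X n \<omega>"
  by (simp add: L_n_def sample_mean_def)

lemma sample_mean_cmult: "sample_mean (\<lambda>x. c * g x) X n \<omega> = c * sample_mean g X n \<omega>"
  unfolding sample_mean_def sum_distrib_left[symmetric] by simp

lemma sample_mean_uminus: "sample_mean (\<lambda>x. - g x) X n \<omega> = - sample_mean g X n \<omega>"
  by (simp add: sample_mean_def sum_negf)

lemma abs_sample_mean_diff_le:
  assumes "\<And>x. \<bar>g x - h x\<bar> \<le> c"
  shows "\<bar>sample_mean g X n \<omega> - sample_mean h X n \<omega>\<bar> \<le> c"
proof (cases "n = 0")
  case True
  then show ?thesis using assms[of 0] by (simp add: sample_mean_def)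
next
  case False
  have "\<bar>(\<Sum>i=1..n. g (X i \<omega>)) - (\<Sum>i=1..n. h (X i \<omega>))\<bar> \<le> (\<Sum>i=1..n. \<bar>g (X i \<omega>) - h (X i \<omega>)\<bar>)"
    by (metis sum_subtractf sum_abs)
  also have "\<dots> \<le> real n * c"
    using sum_mono[of "{1..n}", OF assms] by simp
  finally show ?thesis
    using False by (simp add: sample_mean_def diff_divide_distrib[symmetric] abs_divide divide_le_eq mult.commute)
qed

lemma has_real_derivative_sample_mean:
  assumes "\<And>x. ((\<lambda>t. g x t) has_real_derivative g' x t) (at t)"
  shows "((\<lambda>t. sample_mean (\<lambda>x. g x t) X n \<omega>) has_real_derivative sample_mean (\<lambda>x. g' x t) X n \<omega>) (at t)"
  unfolding sample_mean_def by (intro DERIV_cdivide DERIV_sum assms)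

section \<open>Almost sure convergence of sample means\<close>

lemma
  fixes X :: "nat \<Rightarrow> 'a \<Rightarrow> real"
  assumes "prob_space M" and "prob_space.indep_vars M (\<lambda>_. borel) X {1..}"
    and "\<And>i. i \<ge> 1 \<Longrightarrow> distr M borel (X i) = N"
  shows iid_law_prob_space: "prob_space N"
    and iid_law_sets: "sets N = sets borel"
proof -
  interpret prob_space M by fact
  have "random_variable borel (X 1)"
    using assms(2) unfolding indep_vars_def by auto
  then have "prob_space (distr M borel (X 1))" by (rule prob_space_distr)
  then show "prob_space N" using assms(3)[of 1] by simp
  show "sets N = sets borel" using assms(3)[of 1, symmetric] by simp
qed

lemma borel_measurable_sample_mean [measurable]:
  assumes "\<And>i. i \<ge> 1 \<Longrightarrow> X i \<in> borel_measurable M" and [measurable]: "g \<in> borel_measurable borel"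
  shows "(\<lambda>\<omega>. sample_mean g X n \<omega>) \<in> borel_measurable M"
proof -
  have "(\<lambda>\<omega>. \<Sum>i=1..n. g (X i \<omega>)) \<in> borel_measurable M"
    using assms(1) by (intro borel_measurable_sum) (simp add: measurable_compose[OF _ assms(2)])
  then show ?thesis
    unfolding sample_mean_def by measurable
qed

lemma prob_sample_mean_deviation_le:
  fixes X :: "nat \<Rightarrow> 'a \<Rightarrow> real"
  assumes M: "prob_space M" and indep: "prob_space.indep_vars M (\<lambda>_. borel) X {1..}"
    and law: "\<And>i. i \<ge> 1 \<Longrightarrow> distr M borel (X i) = N"
    and g[measurable]: "g \<in> borel_measurable borel" and bounded: "\<And>x. \<bar>g x\<bar> \<le> B"
    and "0 < e" and "1 \<le> n"
  shows "measure M {\<omega> \<in> space M. e \<le> \<bar>sample_mean g X n \<omega> - (\<integral>x. g x \<partial>N)\<bar>}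
    \<le> 2 * exp (- e\<^sup>2 / (2 * (\<bar>B\<bar> + 1)\<^sup>2)) ^ n"
proof -
  interpret prob_space M by fact
  define Y where "Y = (\<lambda>i \<omega>. g (X i \<omega>))"
  define b where "b = \<bar>B\<bar> + 1"
  have "0 < b" by (simp add: b_def)
  have X_rv: "random_variable borel (X i)" if "i \<ge> 1" for i
    using indep that unfolding indep_vars_def by auto
  have Y_rv: "random_variable borel (Y i)" if "i \<ge> 1" for i
    using measurable_compose[OF X_rv[OF that] g] by (simp add: Y_def comp_def)
  have Y_law: "distr M borel (Y i) = distr M borel (Y 1)" if "i \<ge> 1" for i
    using distr_distr[OF g X_rv[OF that]] distr_distr[OF g X_rv[of 1]] law[OF that] law[of 1]
    by (simp add: Y_def comp_def)
  have mean: "expectation (Y 1) = (\<integral>x. g x \<partial>N)"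
    using integral_distr[OF X_rv[of 1] g] law[of 1] by (simp add: Y_def)
  interpret H: Hoeffding_ineq_iid M "{1..n}" Y "Y 1" "- b" b "expectation (Y 1)"
  proof unfold_locales
    show "indep_vars (\<lambda>_. borel) Y {1..n}"
      unfolding Y_def by (rule indep_vars_compose2[OF indep_vars_subset[OF indep]]) auto
    show "AE x in M. Y 1 x \<in> {- b..b}"
    proof (intro AE_I2)
      fix x
      show "Y 1 x \<in> {- b..b}"
        using bounded[of "X 1 x"] by (auto simp: Y_def b_def abs_le_iff)
    qed
    show "distr M borel (Y i) = distr M borel (Y 1)" if "i \<in> {1..n}" for i
      using that by (intro Y_law) simp
    show "random_variable borel (Y 1)" by (rule Y_rv) simp
  qed simp_all
  have "measure M {\<omega> \<in> space M. e \<le> \<bar>sample_mean g X n \<omega> - (\<integral>x. g x \<partial>N)\<bar>}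
      \<le> 2 * exp (- 2 * real n * e\<^sup>2 / (b - - b)\<^sup>2)"
    using H.Hoeffding_ineq_abs_ge'[of e, unfolded mean] \<open>0 < e\<close> \<open>0 < b\<close> \<open>1 \<le> n\<close>
    by (simp add: sample_mean_def Y_def)
  also have "\<dots> = 2 * exp (- e\<^sup>2 / (2 * b\<^sup>2)) ^ n"
    using \<open>0 < b\<close> by (simp add: exp_of_nat_mult[symmetric] field_simps power2_eq_square)
  finally show ?thesis by (simp add: b_def)
qed

text \<open>The deviation probabilities decay geometrically, so Borel--Cantelli applies.\<close>

lemma AE_eventually_sample_mean_close:
  fixes X :: "nat \<Rightarrow> 'a \<Rightarrow> real"
  assumes M: "prob_space M" and indep: "prob_space.indep_vars M (\<lambda>_. borel) X {1..}"
    and law: "\<And>i. i \<ge> 1 \<Longrightarrow> distr M borel (X i) = N"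
    and g[measurable]: "g \<in> borel_measurable borel" and bounded: "\<And>x. \<bar>g x\<bar> \<le> B"
    and "0 < e"
  shows "AE \<omega> in M. eventually (\<lambda>n. \<bar>sample_mean g X n \<omega> - (\<integral>x. g x \<partial>N)\<bar> < e) sequentially"
proof -
  interpret prob_space M by fact
  define A where "A n = {\<omega> \<in> space M. e \<le> \<bar>sample_mean g X n \<omega> - (\<integral>x. g x \<partial>N)\<bar>}" for n
  define q where "q = exp (- e\<^sup>2 / (2 * (\<bar>B\<bar> + 1)\<^sup>2))"
  have "q < 1" using \<open>0 < e\<close> by (simp add: q_def)
  have "random_variable borel (X i)" if "i \<ge> 1" for i
    using indep that unfolding indep_vars_def by auto
  then have A_sets[measurable]: "A n \<in> sets M" for n
    unfolding A_def by measurable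
  have "summable (\<lambda>n. measure M (A n))"
  proof (rule summable_comparison_test'[where N=1])
    show "summable (\<lambda>n. 2 * q ^ n)"
      using \<open>q < 1\<close> by (intro summable_mult summable_geometric) (simp add: q_def)
    show "norm (measure M (A n)) \<le> 2 * q ^ n" if "1 \<le> n" for n
      using prob_sample_mean_deviation_le[OF assms that] by (simp add: A_def q_def)
  qed
  then have "AE \<omega> in M. eventually (\<lambda>n. \<omega> \<in> space M - A n) sequentially"
    by (intro borel_cantelli_AE1) (auto simp: emeasure_eq_measure)
  then show ?thesis
    by (auto simp: A_def not_le elim!: eventually_mono)
qed

lemma AE_eventually_sample_mean_gt:
  fixes X :: "nat \<Rightarrow> 'a \<Rightarrow> real"
  assumes "prob_space M" and "prob_space.indep_vars M (\<lambda>_. borel) X {1..}"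
    and "\<And>i. i \<ge> 1 \<Longrightarrow> distr M borel (X i) = N"
    and "g \<in> borel_measurable borel" and "\<And>x. \<bar>g x\<bar> \<le> B"
    and "c < (\<integral>x. g x \<partial>N)"
  shows "AE \<omega> in M. eventually (\<lambda>n. c < sample_mean g X n \<omega>) sequentially"
  using AE_eventually_sample_mean_close[OF assms(1-5), of "(\<integral>x. g x \<partial>N) - c"] assms(6)
  by (auto elim!: eventually_mono simp: abs_less_iff)

lemma abs_integral_diff_le:
  fixes f h :: "'a \<Rightarrow> real"
  assumes "prob_space N" and "integrable N f" and "integrable N h" and "\<And>x. \<bar>f x - h x\<bar> \<le> c"
  shows "\<bar>(\<integral>x. f x \<partial>N) - (\<integral>x. h x \<partial>N)\<bar> \<le> c"
proof -
  interpret prob_space N by fact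
  have "\<bar>(\<integral>x. f x \<partial>N) - (\<integral>x. h x \<partial>N)\<bar> = \<bar>\<integral>x. f x - h x \<partial>N\<bar>"
    using assms(2,3) by simp
  also have "\<dots> \<le> (\<integral>x. \<bar>f x - h x\<bar> \<partial>N)"
    using integral_norm_bound[of N "\<lambda>x. f x - h x"] by simp
  also have "\<dots> \<le> (\<integral>x. c \<partial>N)"
    using assms by (intro integral_mono) auto
  finally show ?thesis by (simp add: prob_space)
qed

lemma continuous_on_Icc_neg_bounded_away:
  fixes H :: "real \<Rightarrow> real"
  assumes "continuous_on {a..b} H" and "\<And>t. t \<in> {a..b} \<Longrightarrow> H t < 0"
  shows "\<exists>\<delta>>0. \<forall>t\<in>{a..b}. H t \<le> - \<delta>"
proof (cases "a \<le> b")
  case True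
  then obtain t0 where "t0 \<in> {a..b}" and "\<forall>t\<in>{a..b}. H t \<le> H t0"
    using continuous_attains_sup[OF compact_Icc _ assms(1)] by auto
  then show ?thesis
    using assms(2) by (intro exI[of _ "- H t0"]) auto
qed (auto intro: exI[of _ 1])

text \<open>The means \<open>\<integral>g(x,t)\<close> stay below some \<open>-\<delta>\<close> on the compact interval, so a finite net of mesh
  proportional to \<open>\<delta>\<close> controls all \<open>t\<close> through the Lipschitz bound.\<close>

lemma AE_eventually_uniform_sample_mean_neg:
  fixes X :: "nat \<Rightarrow> 'a \<Rightarrow> real" and g :: "real \<Rightarrow> real \<Rightarrow> real"
  assumes M: "prob_space M" and indep: "prob_space.indep_vars M (\<lambda>_. borel) X {1..}"
    and law: "\<And>i. i \<ge> 1 \<Longrightarrow> distr M borel (X i) = N"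
    and g_meas: "\<And>t. (\<lambda>x. g x t) \<in> borel_measurable borel" and bounded: "\<And>x t. \<bar>g x t\<bar> \<le> B"
    and lipschitz: "\<And>x s t. \<bar>g x s - g x t\<bar> \<le> L * \<bar>s - t\<bar>"
    and neg: "\<And>t. t \<in> {a..b} \<Longrightarrow> (\<integral>x. g x t \<partial>N) < 0"
  shows "AE \<omega> in M. eventually (\<lambda>n. \<forall>t\<in>{a..b}. sample_mean (\<lambda>x. g x t) X n \<omega> < 0) sequentially"
proof -
  interpret N: prob_space N using iid_law_prob_space[OF M indep law] .
  define H where "H t = (\<integral>x. g x t \<partial>N)" for t
  have "0 \<le> L" using order_trans[OF abs_ge_zero lipschitz[of undefined 1 0]] by simp
  have "(\<lambda>x. g x t) \<in> borel_measurable N" for t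
    using g_meas measurable_cong_sets[OF iid_law_sets[OF M indep law] refl] by blast
  then have "integrable N (\<lambda>x. g x t)" for t
    using bounded by (intro N.integrable_const_bound[where B=B]) auto
  then have H_lipschitz: "\<bar>H s - H t\<bar> \<le> L * \<bar>s - t\<bar>" for s t
    unfolding H_def using lipschitz by (intro abs_integral_diff_le) (simp_all add: N.prob_space_axioms)
  then have "L-lipschitz_on {a..b} H"
    using \<open>0 \<le> L\<close> by (intro lipschitz_onI) (simp_all add: dist_real_def)
  then have "continuous_on {a..b} H"
    by (rule lipschitz_on_continuous_on)
  then obtain \<delta> where "0 < \<delta>" and H_neg: "\<forall>t\<in>{a..b}. H t \<le> - \<delta>"
    using continuous_on_Icc_neg_bounded_away neg[folded H_def] by blast
  define h where "h = \<delta> / (4 * (L + 1))"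
  have "0 < h" using \<open>0 < \<delta>\<close> \<open>0 \<le> L\<close> by (simp add: h_def)
  have "L * h \<le> \<delta> / 4"
    using \<open>0 < \<delta>\<close> \<open>0 \<le> L\<close> by (simp add: h_def field_simps)
  obtain F where "finite F" and F_net: "{a..b} \<subseteq> (\<Union>s\<in>F. ball s h)"
    by (rule compactE_image[of "{a..b}" "{a..b}" "\<lambda>s. ball s h"]) (use \<open>0 < h\<close> in auto)
  have "AE \<omega> in M. \<forall>s\<in>F. eventually (\<lambda>n. \<bar>sample_mean (\<lambda>x. g x s) X n \<omega> - H s\<bar> < \<delta> / 4) sequentially"
    unfolding H_def
    by (intro AE_finite_allI[OF \<open>finite F\<close>] AE_eventually_sample_mean_close[OF M indep law g_meas bounded])
       (use \<open>0 < \<delta>\<close> in auto)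
  then show ?thesis
  proof (eventually_elim)
    case (elim \<omega>)
    then have "eventually (\<lambda>n. \<forall>s\<in>F. \<bar>sample_mean (\<lambda>x. g x s) X n \<omega> - H s\<bar> < \<delta> / 4) sequentially"
      by (intro eventually_ball_finite \<open>finite F\<close>) auto
    then show ?case
    proof (rule eventually_mono, intro ballI)
      fix n t
      assume close: "\<forall>s\<in>F. \<bar>sample_mean (\<lambda>x. g x s) X n \<omega> - H s\<bar> < \<delta> / 4" and "t \<in> {a..b}"
      then obtain s where "s \<in> F" and "\<bar>s - t\<bar> < h" using F_net by (auto simp: dist_real_def)
      then have "L * \<bar>s - t\<bar> \<le> \<delta> / 4"
        using \<open>L * h \<le> \<delta> / 4\<close> \<open>0 \<le> L\<close> by (meson less_imp_le mult_left_mono order_trans)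
      moreover have "\<bar>sample_mean (\<lambda>x. g x t) X n \<omega> - sample_mean (\<lambda>x. g x s) X n \<omega>\<bar> \<le> L * \<bar>s - t\<bar>"
        by (rule abs_sample_mean_diff_le) (metis lipschitz abs_minus_commute)
      moreover have "H s \<le> H t + L * \<bar>s - t\<bar>"
        using H_lipschitz[of s t] by linarith
      ultimately show "sample_mean (\<lambda>x. g x t) X n \<omega> < 0"
        using close \<open>s \<in> F\<close> H_neg \<open>t \<in> {a..b}\<close> unfolding abs_le_iff abs_less_iff by fastforce
    qed
  qed
qed

lemma AE_eventually_uniform_sample_mean_pos:
  fixes X :: "nat \<Rightarrow> 'a \<Rightarrow> real" and g :: "real \<Rightarrow> real \<Rightarrow> real"
  assumes "prob_space M" and "prob_space.indep_vars M (\<lambda>_. borel) X {1..}"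
    and "\<And>i. i \<ge> 1 \<Longrightarrow> distr M borel (X i) = N"
    and "\<And>t. (\<lambda>x. g x t) \<in> borel_measurable borel" and "\<And>x t. \<bar>g x t\<bar> \<le> B"
    and "\<And>x s t. \<bar>g x s - g x t\<bar> \<le> L * \<bar>s - t\<bar>"
    and "\<And>t. t \<in> {a..b} \<Longrightarrow> 0 < (\<integral>x. g x t \<partial>N)"
  shows "AE \<omega> in M. eventually (\<lambda>n. \<forall>t\<in>{a..b}. 0 < sample_mean (\<lambda>x. g x t) X n \<omega>) sequentially"
proof -
  have "\<bar>- g x s - - g x t\<bar> \<le> L * \<bar>s - t\<bar>" for x s t
    using assms(6)[of x t s] by (simp add: abs_minus_commute)
  then have "AE \<omega> in M. eventually (\<lambda>n. \<forall>t\<in>{a..b}. sample_mean (\<lambda>x. - g x t) X n \<omega> < 0) sequentially"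
    using assms(4,5,7)
    by (intro AE_eventually_uniform_sample_mean_neg[OF assms(1-3), where B=B and L=L]) auto
  then show ?thesis
    by (simp add: sample_mean_uminus)
qed

lemma exists_Icc_measure_gt:
  fixes M :: "real measure"
  assumes "finite_measure M" and "sets M = sets borel" and "c < measure M (space M)"
  shows "\<exists>K\<ge>0. c < measure M {-K..K}"
proof -
  interpret finite_measure M by fact
  define A where "A k = {- real k..real k}" for k
  have "(\<lambda>k. measure M (A k)) \<longlonglongrightarrow> measure M (\<Union>k. A k)"
    by (rule finite_Lim_measure_incseq) (auto simp: A_def assms(2) incseq_def)
  moreover have "(\<Union>k. A k) = space M"
  proof -
    have "x \<in> (\<Union>k. A k)" for x
    proof -
      obtain k where "\<bar>x\<bar> \<le> real k" using real_arch_simple by blast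
      then have "x \<in> A k" by (auto simp: A_def abs_le_iff)
      then show ?thesis by blast
    qed
    then show ?thesis using sets_eq_imp_space_eq[OF assms(2)] by auto
  qed
  ultimately have "eventually (\<lambda>k. c < measure M (A k)) sequentially"
    using assms(3) by (auto dest: order_tendstoD(1))
  then obtain k where "c < measure M (A k)" by (auto simp: eventually_sequentially)
  then show ?thesis by (intro exI[of _ "real k"]) (simp add: A_def)
qed

section \<open>The law \<open>nu_m\<close> and the function \<open>G_m\<close>\<close>

lemma sets_nu_m [measurable_cong]: "sets (nu_m m) = sets borel"
  by (simp add: nu_m_def)

lemma
  assumes "prob_space (nu_m m)"
  shows c_m_pos: "0 < c_m m"
    and integrable_nu_m_density: "integrable lborel (\<lambda>x. (1 + x\<^sup>2) powr (- m))"
proof -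
  interpret prob_space "nu_m m" by fact
  have total: "(\<integral>\<^sup>+x. ennreal (c_m m * (1 + x\<^sup>2) powr (- m)) \<partial>lborel) = 1"
    using emeasure_space_1 by (simp add: nu_m_def emeasure_density)
  show "0 < c_m m"
  proof (rule ccontr)
    assume "\<not> 0 < c_m m"
    then have "(\<lambda>x. ennreal (c_m m * (1 + x\<^sup>2) powr (- m))) = (\<lambda>x. 0)"
      by (intro ext) (simp add: ennreal_eq_0_iff mult_nonpos_nonneg)
    with total show False by simp
  qed
  then have "integrable lborel (\<lambda>x. c_m m * (1 + x\<^sup>2) powr (- m))"
    using total by (intro integrableI_nn_integral_finite[where x=1]) auto
  then show "integrable lborel (\<lambda>x. (1 + x\<^sup>2) powr (- m))"
    using \<open>0 < c_m m\<close> by simp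
qed

lemma integral_nu_m:
  assumes "prob_space (nu_m m)" and [measurable]: "h \<in> borel_measurable borel"
  shows "(\<integral>x. h x \<partial>nu_m m) = (\<integral>x. c_m m * (1 + x\<^sup>2) powr (- m) * h x \<partial>lborel)"
  unfolding nu_m_def using c_m_pos[OF assms(1)] by (subst integral_density) auto

lemma powr_shift_difference_neg:
  fixes m t u :: real
  assumes "0 < m" and "t * u \<noteq> 0"
  shows "t * u * ((1 + (t + u)\<^sup>2) powr (- m) - (1 + (t - u)\<^sup>2) powr (- m)) < 0"
proof (cases "0 < t * u")
  case True
  then have "1 + (t - u)\<^sup>2 < 1 + (t + u)\<^sup>2" by (simp add: power2_eq_square algebra_simps)
  then have "(1 + (t + u)\<^sup>2) powr (- m) < (1 + (t - u)\<^sup>2) powr (- m)"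
    using \<open>0 < m\<close> by (intro powr_less_mono2_neg) auto
  with True show ?thesis by (simp add: mult_pos_neg)
next
  case False
  then have "t * u < 0" using assms(2) by linarith
  then have "1 + (t + u)\<^sup>2 < 1 + (t - u)\<^sup>2" by (simp add: power2_eq_square algebra_simps)
  then have "(1 + (t - u)\<^sup>2) powr (- m) < (1 + (t + u)\<^sup>2) powr (- m)"
    using \<open>0 < m\<close> by (intro powr_less_mono2_neg) auto
  with \<open>t * u < 0\<close> show ?thesis by (simp add: mult_neg_pos)
qed

lemma integral_neg_AE:
  fixes f :: "'a \<Rightarrow> real"
  assumes "integrable M f" and "AE x in M. f x < 0" and "emeasure M (space M) \<noteq> 0"
  shows "(\<integral>x. f x \<partial>M) < 0"
proof (rule ccontr)
  assume "\<not> (\<integral>x. f x \<partial>M) < 0"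
  moreover have "0 \<le> (\<integral>x. - f x \<partial>M)"
    using assms(2) by (intro integral_nonneg_AE) (auto elim!: eventually_mono)
  ultimately have "(\<integral>x. - f x \<partial>M) = 0" by simp
  then have "AE x in M. - f x = 0"
    using assms(1,2) by (subst (asm) integral_nonneg_eq_0_iff_AE) (auto elim!: eventually_mono)
  then have "AE x in M. False"
    by (rule eventually_elim2[OF assms(2)]) simp
  with assms(3) show False
    by (simp add: eventually_False ae_filter_eq_bot_iff)
qed

text \<open>Pairing \<open>x = t + u\<close> with \<open>x = t - u\<close>: the odd factor \<open>D\<close> then multiplies the difference of the
  density at two points, and the point nearer to the origin carries more mass.\<close>

lemma G_m_sign:
  assumes "prob_space (nu_m m)" and "0 < m" and "t \<noteq> 0"
  shows "t * G_m m t < 0"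
proof -
  define k where "k x = (1 + x\<^sup>2) powr (- m) * D x t" for x
  have [measurable]: "k \<in> borel_measurable borel"
    unfolding k_def by measurable
  have k_integrable: "integrable lborel k"
  proof (rule Bochner_Integration.integrable_bound[OF integrable_nu_m_density[OF assms(1)]])
    show "AE x in lborel. norm (k x) \<le> norm ((1 + x\<^sup>2) powr (- m))"
      using abs_D_le_1 by (intro AE_I2) (simp add: k_def abs_mult mult_left_le)
  qed simp
  have G_eq: "G_m m t = c_m m * (\<integral>x. k x \<partial>lborel)"
    unfolding G_m_def integral_nu_m[OF assms(1) D_measurable]
    by (simp add: k_def mult.assoc)
  define j where "j u = t * (k (t + u) + k (t - u))" for u
  have j_integrable: "integrable lborel j"
    using lborel_integrable_real_affine[OF k_integrable, of 1 t]
      lborel_integrable_real_affine[OF k_integrable, of "-1" t]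
    unfolding j_def by (intro integrable_mult_right Bochner_Integration.integrable_add) simp_all
  have j_integral: "(\<integral>u. j u \<partial>lborel) = 2 * t * (\<integral>x. k x \<partial>lborel)"
    using lborel_integral_real_affine[of 1 k t] lborel_integral_real_affine[of "-1" k t]
      lborel_integrable_real_affine[OF k_integrable, of 1 t]
      lborel_integrable_real_affine[OF k_integrable, of "-1" t]
    by (simp add: j_def)
  have "j u = t * u * ((1 + (t + u)\<^sup>2) powr (- m) - (1 + (t - u)\<^sup>2) powr (- m)) / (1 + u\<^sup>2)" for u
    by (simp add: j_def k_def D_def power2_eq_square algebra_simps add_divide_distrib diff_divide_distrib)
  then have j_neg: "AE u in lborel. j u < 0"
    using AE_lborel_singleton[of 0] powr_shift_difference_neg[OF \<open>0 < m\<close>] \<open>t \<noteq> 0\<close>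
    by (auto elim!: eventually_mono simp: divide_neg_pos)
  then have "(\<integral>u. j u \<partial>lborel) < 0"
    using j_integrable by (intro integral_neg_AE) simp_all
  then have "t * (\<integral>x. k x \<partial>lborel) < 0"
    using j_integral by simp
  then show ?thesis
    using G_eq c_m_pos[OF assms(1)] by (metis mult.left_commute mult_pos_neg)
qed

lemma G_m_neg:
  assumes "prob_space (nu_m m)" and "0 < m" and "0 < t"
  shows "G_m m t < 0"
  using G_m_sign[OF assms(1,2), of t] assms(3) by (simp add: mult_less_0_iff)

lemma G_m_pos:
  assumes "prob_space (nu_m m)" and "0 < m" and "t < 0"
  shows "0 < G_m m t"
  using G_m_sign[OF assms(1,2), of t] assms(3) by (simp add: mult_less_0_iff)

lemma AE_eventually_sample_mean_D_sign:
  fixes X :: "nat \<Rightarrow> 'a \<Rightarrow> real"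
  assumes iid: "prob_space M" "prob_space.indep_vars M (\<lambda>_. borel) X {1..}"
      "\<And>i. i \<ge> 1 \<Longrightarrow> distr M borel (X i) = nu_m m"
    and "0 < m" and "0 < r"
  shows "AE \<omega> in M. eventually (\<lambda>n. (\<forall>t\<in>{r..T}. sample_mean (\<lambda>x. D x t) X n \<omega> < 0) \<and>
      (\<forall>t\<in>{-T..-r}. 0 < sample_mean (\<lambda>x. D x t) X n \<omega>)) sequentially"
proof -
  have \<nu>: "prob_space (nu_m m)" by (rule iid_law_prob_space[OF iid])
  have "AE \<omega> in M. eventually (\<lambda>n. \<forall>t\<in>{r..T}. sample_mean (\<lambda>x. D x t) X n \<omega> < 0) sequentially"
    using abs_D_le_1 D_lipschitz G_m_neg[OF \<nu> \<open>0 < m\<close>] \<open>0 < r\<close>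
    by (intro AE_eventually_uniform_sample_mean_neg[OF iid, where B=1 and L=1]) (auto simp: G_m_def)
  moreover have "AE \<omega> in M. eventually (\<lambda>n. \<forall>t\<in>{-T..-r}. 0 < sample_mean (\<lambda>x. D x t) X n \<omega>) sequentially"
    using abs_D_le_1 D_lipschitz G_m_pos[OF \<nu> \<open>0 < m\<close>] \<open>0 < r\<close>
    by (intro AE_eventually_uniform_sample_mean_pos[OF iid, where B=1 and L=1]) (auto simp: G_m_def)
  ultimately show ?thesis
    by eventually_elim (rule eventually_conj)
qed

lemma LIMSEQ_difference_quotient:
  fixes f :: "real \<Rightarrow> real"
  assumes "(f has_real_derivative d) (at t)"
  shows "(\<lambda>k. (f (t + inverse (Suc k)) - f t) / inverse (Suc k)) \<longlonglongrightarrow> d"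
proof -
  have "((\<lambda>h. (f (t + h) - f t) / h) \<longlongrightarrow> d) (at 0)"
    using assms by (simp add: DERIV_def)
  moreover have "filterlim (\<lambda>k. inverse (real (Suc k))) (at 0) sequentially"
    unfolding filterlim_at using LIMSEQ_inverse_real_of_nat by auto
  ultimately show ?thesis
    using filterlim_compose by (auto simp: o_def)
qed

text \<open>Differentiation under the integral sign, by dominated convergence: the difference quotients of
  \<open>D\<close> are bounded by \<open>1\<close> because \<open>D\<close> is \<open>1\<close>-Lipschitz.\<close>

lemma G_m_derivative_eq:
  assumes "prob_space (nu_m m)" and "(G_m m has_real_derivative d) (at t)"
  shows "d = (\<integral>x. D' (x - t) \<partial>nu_m m)"
proof -
  interpret N: prob_space "nu_m m" by fact
  have D_integrable: "integrable (nu_m m) (\<lambda>x. D x s)" for s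
    using abs_D_le_1 by (intro N.integrable_const_bound[where B=1]) auto
  define h where "h k = inverse (real (Suc k))" for k
  define q where "q k x = (D x (t + h k) - D x t) / h k" for k x
  have "(\<lambda>k. (\<integral>x. q k x \<partial>nu_m m)) \<longlonglongrightarrow> d"
    using LIMSEQ_difference_quotient[OF assms(2)] D_integrable
    by (simp add: q_def h_def G_m_def)
  moreover have "(\<lambda>k. (\<integral>x. q k x \<partial>nu_m m)) \<longlonglongrightarrow> (\<integral>x. D' (x - t) \<partial>nu_m m)"
  proof (rule integral_dominated_convergence[where w="\<lambda>_. 1"])
    show "AE x in nu_m m. (\<lambda>k. q k x) \<longlonglongrightarrow> D' (x - t)"
      using LIMSEQ_difference_quotient[OF has_real_derivative_D] by (simp add: q_def h_def)
    show "AE x in nu_m m. norm (q k x) \<le> 1" for k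
    proof (intro AE_I2)
      fix x
      show "norm (q k x) \<le> 1"
        using D_lipschitz[of x "t + h k" t] by (simp add: q_def h_def abs_divide divide_le_eq)
    qed
  qed (auto simp: q_def D'_def)
  ultimately show ?thesis
    using LIMSEQ_unique by blast
qed

section \<open>Minimisers of the empirical criterion\<close>

lemma L_n_has_real_derivative:
  "((\<lambda>t. L_n X n t \<omega>) has_real_derivative -2 * sample_mean (\<lambda>x. D x t) X n \<omega>) (at t)"
proof -
  have "((\<lambda>t. sample_mean (\<lambda>x. ln (1 + (x - t)\<^sup>2)) X n \<omega>) has_real_derivative
      sample_mean (\<lambda>x. -2 * D x t) X n \<omega>) (at t)"
    by (rule has_real_derivative_sample_mean) (rule has_real_derivative_ln_one_plus_sq)
  then show ?thesis
    unfolding L_n_eq_sample_mean sample_mean_cmult .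
qed

lemma exists_global_minimizer_in_Icc:
  fixes f :: "real \<Rightarrow> real"
  assumes "continuous_on {-T..T} f" and "0 \<le> T" and tail: "\<And>t. T \<le> \<bar>t\<bar> \<Longrightarrow> f 0 < f t"
  shows "\<exists>t0\<in>{-T..T}. \<forall>s. f t0 \<le> f s"
proof -
  obtain t0 where "t0 \<in> {-T..T}" and t0_min: "\<forall>s\<in>{-T..T}. f t0 \<le> f s"
    using continuous_attains_inf[OF compact_Icc _ assms(1)] \<open>0 \<le> T\<close> by auto
  moreover have "f t0 \<le> f s" for s
  proof (cases "T \<le> \<bar>s\<bar>")
    case True
    moreover have "f t0 \<le> f 0" using t0_min \<open>0 \<le> T\<close> by simp
    ultimately show ?thesis using tail[of s] by simp
  next
    case False
    then show ?thesis using t0_min by (simp add: not_le abs_less_iff)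
  qed
  ultimately show ?thesis by blast
qed

lemma unique_global_minimizer_in_interval:
  fixes f f' :: "real \<Rightarrow> real"
  assumes deriv: "\<And>t. (f has_real_derivative f' t) (at t)"
    and "0 \<le> r" and "r \<le> T"
    and mono: "strict_mono_on {-r..r} f'"
    and right: "\<And>t. t \<in> {r..T} \<Longrightarrow> 0 < f' t"
    and left: "\<And>t. t \<in> {-T..-r} \<Longrightarrow> f' t < 0"
    and tail: "\<And>t. T \<le> \<bar>t\<bar> \<Longrightarrow> f 0 < f t"
  shows "\<exists>!t. t \<in> {-r..r} \<and> (\<forall>s. f t \<le> f s)"
proof -
  have "continuous_on {-T..T} f"
    by (rule continuous_at_imp_continuous_on) (use deriv DERIV_isCont in blast)
  then obtain t0 where t0: "t0 \<in> {-T..T}" and global_min: "\<And>s. f t0 \<le> f s"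
    using exists_global_minimizer_in_Icc tail \<open>0 \<le> r\<close> \<open>r \<le> T\<close> by (metis order_trans)
  have "t0 \<in> {-r..r}"
  proof (rule ccontr)
    assume "t0 \<notin> {-r..r}"
    then consider "r < t0" | "t0 < -r" by fastforce
    then show False
    proof cases
      case 1
      have "\<exists>y. DERIV f x :> y \<and> 0 < y" if "r \<le> x" "x \<le> t0" for x
        using deriv[of x] right[of x] that t0 by auto
      then have "f r < f t0" by (rule DERIV_pos_imp_increasing[OF 1])
      then show False using global_min[of r] by simp
    next
      case 2
      have "\<exists>y. DERIV f x :> y \<and> y < 0" if "t0 \<le> x" "x \<le> -r" for x
        using deriv[of x] left[of x] that t0 by auto
      then have "f (-r) < f t0" by (rule DERIV_neg_imp_decreasing[OF 2])
      then show False using global_min[of "-r"] by simp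
    qed
  qed
  have critical: "f' t = 0" if "\<forall>s. f t \<le> f s" for t
    by (rule DERIV_local_min[OF deriv[of t], of 1]) (use that in auto)
  show ?thesis
  proof (rule ex1I[of _ t0])
    show "t0 \<in> {-r..r} \<and> (\<forall>s. f t0 \<le> f s)"
      using \<open>t0 \<in> {-r..r}\<close> global_min by simp
    show "t = t0" if "t \<in> {-r..r} \<and> (\<forall>s. f t \<le> f s)" for t
      using strict_mono_on_eqD[OF mono _ \<open>t0 \<in> {-r..r}\<close>, of t] critical[of t] critical[of t0]
        that global_min by simp
  qed
qed

lemma ln_one_plus_sq_shift_diff_ge:
  fixes x t :: real
  shows "- ln (2 * (1 + t\<^sup>2)) \<le> ln (1 + (x - t)\<^sup>2) - ln (1 + x\<^sup>2)"
proof -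
  have "0 \<le> (x - 2 * t)\<^sup>2 + 2 * t\<^sup>2 * (x - t)\<^sup>2" by simp
  then have "1 + x\<^sup>2 \<le> 2 * (1 + t\<^sup>2) * (1 + (x - t)\<^sup>2)"
    by (simp add: power2_eq_square algebra_simps)
  then have "ln (1 + x\<^sup>2) \<le> ln (2 * (1 + t\<^sup>2) * (1 + (x - t)\<^sup>2))"
    by (rule ln_mono) simp
  also have "\<dots> = ln (2 * (1 + t\<^sup>2)) + ln (1 + (x - t)\<^sup>2)"
    by (intro ln_mult_pos mult_pos_pos) simp_all
  finally show ?thesis by simp
qed

lemma ln_one_plus_sq_shift_diff_ge_far:
  fixes x t K :: real
  assumes "\<bar>x\<bar> \<le> K" and "2 * K \<le> \<bar>t\<bar>"
  shows "ln ((1 + t\<^sup>2) / (4 * (1 + K\<^sup>2))) \<le> ln (1 + (x - t)\<^sup>2) - ln (1 + x\<^sup>2)"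
proof -
  have "\<bar>t\<bar> \<le> 2 * \<bar>x - t\<bar>"
    using assms by (smt (verit) abs_triangle_ineq4)
  then have "t\<^sup>2 \<le> 4 * (x - t)\<^sup>2"
    using abs_le_square_iff[of t "2 * \<bar>x - t\<bar>"] by (simp add: power_mult_distrib)
  moreover have "x\<^sup>2 \<le> K\<^sup>2"
    using assms(1) by (simp add: abs_le_square_iff[symmetric] abs_le_iff)
  ultimately have "(1 + t\<^sup>2) * (1 + x\<^sup>2) \<le> (4 * (1 + (x - t)\<^sup>2)) * (1 + K\<^sup>2)"
    by (intro mult_mono) auto
  then have "(1 + t\<^sup>2) * (1 + x\<^sup>2) \<le> (1 + (x - t)\<^sup>2) * (4 * (1 + K\<^sup>2))"
    by (simp only: mult_ac)
  moreover have "0 < 4 * (1 + K\<^sup>2)" by (intro mult_pos_pos) simp_all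
  ultimately have "(1 + t\<^sup>2) / (4 * (1 + K\<^sup>2)) \<le> (1 + (x - t)\<^sup>2) / (1 + x\<^sup>2)"
    by (simp add: pos_divide_le_eq pos_le_divide_eq mult.commute mult.left_commute)
  then have "ln ((1 + t\<^sup>2) / (4 * (1 + K\<^sup>2))) \<le> ln ((1 + (x - t)\<^sup>2) / (1 + x\<^sup>2))"
    by (rule ln_mono) (intro divide_pos_pos mult_pos_pos; simp)
  also have "\<dots> = ln (1 + (x - t)\<^sup>2) - ln (1 + x\<^sup>2)"
    by (rule ln_divide_pos) simp_all
  finally show ?thesis .
qed

lemma ln_bounds_of_cube_le_square:
  fixes a b :: real
  assumes "1 \<le> a" and "0 < b" and "128 * a ^ 3 \<le> b\<^sup>2"
  shows "0 \<le> ln (b / (4 * a))" and "ln (2 * b) \<le> 3 * ln (b / (4 * a))"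
proof -
  have "a\<^sup>2 \<le> a ^ 3" using \<open>1 \<le> a\<close> by (intro power_increasing) auto
  then have "16 * a\<^sup>2 \<le> b\<^sup>2" using assms(3) zero_le_power2[of a] by linarith
  then have "(4 * a)\<^sup>2 \<le> b\<^sup>2" by (simp add: power_mult_distrib)
  then have "4 * a \<le> b" by (rule power2_le_imp_le) (use \<open>0 < b\<close> in simp)
  then show "0 \<le> ln (b / (4 * a))"
    using \<open>1 \<le> a\<close> by simp
  have "2 * b * (4 * a) ^ 3 \<le> b ^ 3"
    using mult_right_mono[OF assms(3), of b] \<open>0 < b\<close>
    by (simp add: power_mult_distrib power3_eq_cube power2_eq_square)
  then have "2 * b \<le> (b / (4 * a)) ^ 3"
    using \<open>1 \<le> a\<close> by (simp add: power_divide pos_le_divide_eq)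
  then have "ln (2 * b) \<le> ln ((b / (4 * a)) ^ 3)"
    using \<open>1 \<le> a\<close> \<open>0 < b\<close> by (subst ln_le_cancel_iff) auto
  then show "ln (2 * b) \<le> 3 * ln (b / (4 * a))"
    by (simp add: ln_realpow)
qed

text \<open>Far from the bulk of the sample, \<open>L_n\<close> exceeds its value at \<open>0\<close>: each of the more than three
  quarters of the sample points inside \<open>[-K, K]\<close> gains at least \<open>A\<close>, each other one loses at most \<open>B\<close>,
  and \<open>B \<le> 3 A\<close>.\<close>

lemma L_n_gt_L_n_0_far:
  assumes mass: "3 / 4 < sample_mean (indicator {-K..K}) X n \<omega>"
    and "2 * K \<le> \<bar>t\<bar>" and far: "128 * (1 + K\<^sup>2) ^ 3 \<le> (1 + t\<^sup>2)\<^sup>2"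
  shows "L_n X n 0 \<omega> < L_n X n t \<omega>"
proof -
  define a where "a = 1 + K\<^sup>2"
  define b where "b = 1 + t\<^sup>2"
  define A where "A = ln (b / (4 * a))"
  define B where "B = ln (2 * b)"
  define p where "p = (\<Sum>i=1..n. indicator {-K..K} (X i \<omega>) :: real)"
  have "1 \<le> a" "1 \<le> b" by (simp_all add: a_def b_def)
  then have "0 < b" "0 < B" by (simp_all add: B_def ln_gt_zero)
  have "n \<noteq> 0"
    using mass by (intro notI) (simp add: sample_mean_def)
  then have "3 / 4 * real n < p"
    using mass by (simp add: sample_mean_def p_def field_simps)
  have "128 * a ^ 3 \<le> b\<^sup>2" using far by (simp add: a_def b_def)
  then have "0 \<le> A" and "B \<le> 3 * A"
    using ln_bounds_of_cube_le_square \<open>1 \<le> a\<close> \<open>0 < b\<close> by (auto simp: A_def B_def)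
  have term_bound: "indicator {-K..K} x * (A + B) - B \<le> ln (1 + (x - t)\<^sup>2) - ln (1 + x\<^sup>2)" for x
    using ln_one_plus_sq_shift_diff_ge_far[of x K t] ln_one_plus_sq_shift_diff_ge[of t x] \<open>2 * K \<le> \<bar>t\<bar>\<close>
    by (cases "x \<in> {-K..K}") (auto simp: A_def B_def a_def b_def)
  have "real n * B \<le> real n * (3 * A)"
    using \<open>B \<le> 3 * A\<close> by (intro mult_left_mono) auto
  then have "real n * B \<le> 3 / 4 * real n * (A + B)"
    by (simp add: algebra_simps)
  also have "\<dots> < p * (A + B)"
    using \<open>3 / 4 * real n < p\<close> \<open>0 \<le> A\<close> \<open>0 < B\<close> by (intro mult_strict_right_mono) auto
  finally have "0 < p * (A + B) - real n * B" by simp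
  also have "\<dots> \<le> (\<Sum>i=1..n. ln (1 + (X i \<omega> - t)\<^sup>2) - ln (1 + (X i \<omega>)\<^sup>2))"
    using sum_mono[of "{1..n}", OF term_bound]
    by (simp add: p_def sum_subtractf sum_distrib_right)
  finally have "0 < (\<Sum>i=1..n. ln (1 + (X i \<omega> - t)\<^sup>2) - ln (1 + (X i \<omega>)\<^sup>2)) / real n"
    using \<open>n \<noteq> 0\<close> by simp
  then show ?thesis
    by (simp add: L_n_def sum_subtractf diff_divide_distrib)
qed

lemma L_n_unique_minimizer_in_interval:
  assumes "0 < r" and "r \<le> T" and "0 \<le> K" and T: "2 * K + 128 * (1 + K\<^sup>2) ^ 3 \<le> T"
    and near: "\<forall>t\<in>{-r..r}. sample_mean (\<lambda>x. D' (x - t)) X n \<omega> < 0"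
    and right: "\<forall>t\<in>{r..T}. sample_mean (\<lambda>x. D x t) X n \<omega> < 0"
    and left: "\<forall>t\<in>{-T..-r}. 0 < sample_mean (\<lambda>x. D x t) X n \<omega>"
    and mass: "3 / 4 < sample_mean (indicator {-K..K}) X n \<omega>"
  shows "\<exists>!t. t \<in> C_Q X n \<omega> \<inter> {-r..r}"
proof -
  define S where "S t = sample_mean (\<lambda>x. D x t) X n \<omega>" for t
  have S_deriv: "(S has_real_derivative sample_mean (\<lambda>x. D' (x - t)) X n \<omega>) (at t)" for t
    unfolding S_def[abs_def] by (rule has_real_derivative_sample_mean) (rule has_real_derivative_D)
  have mono: "strict_mono_on {-r..r} (\<lambda>t. -2 * S t)"
  proof (rule strict_mono_onI)
    fix a b assume "a \<in> {-r..r}" "b \<in> {-r..r}" "a < b"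
    have "S b < S a"
    proof (rule DERIV_neg_imp_decreasing[OF \<open>a < b\<close>])
      fix y assume "a \<le> y" "y \<le> b"
      then have "y \<in> {-r..r}" using \<open>a \<in> {-r..r}\<close> \<open>b \<in> {-r..r}\<close> by simp
      then show "\<exists>z. DERIV S y :> z \<and> z < 0" using S_deriv[of y] near by blast
    qed
    then show "-2 * S a < -2 * S b" by simp
  qed
  have tail: "L_n X n 0 \<omega> < L_n X n t \<omega>" if "T \<le> \<bar>t\<bar>" for t
  proof (rule L_n_gt_L_n_0_far[OF mass])
    have "0 \<le> (1 + K\<^sup>2) ^ 3" by simp
    then show "2 * K \<le> \<bar>t\<bar>" using T that by linarith
    have "128 * (1 + K\<^sup>2) ^ 3 \<le> 1 + t\<^sup>2"
      using T that \<open>0 \<le> K\<close> abs_le_one_plus_sq[of t] by linarith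
    also have "\<dots> \<le> (1 + t\<^sup>2)\<^sup>2" by (rule self_le_power) auto
    finally show "128 * (1 + K\<^sup>2) ^ 3 \<le> (1 + t\<^sup>2)\<^sup>2" .
  qed
  have "\<exists>!t. t \<in> {-r..r} \<and> (\<forall>s. L_n X n t \<omega> \<le> L_n X n s \<omega>)"
  proof (rule unique_global_minimizer_in_interval[where f'="\<lambda>t. -2 * S t"])
    show "((\<lambda>t. L_n X n t \<omega>) has_real_derivative -2 * S t) (at t)" for t
      unfolding S_def by (rule L_n_has_real_derivative)
  qed (use \<open>0 < r\<close> \<open>r \<le> T\<close> mono tail right left in \<open>auto simp: S_def\<close>)
  moreover have "t \<in> C_Q X n \<omega> \<inter> {-r..r} \<longleftrightarrow> t \<in> {-r..r} \<and> (\<forall>s. L_n X n t \<omega> \<le> L_n X n s \<omega>)" for t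
    by (auto simp: C_Q_def)
  ultimately show ?thesis by simp
qed

theorem proposition3p4:
  fixes M :: "'a measure" and X :: "nat \<Rightarrow> 'a \<Rightarrow> real" and m r :: real
  assumes "prob_space M"
    and "m > 1/2"
    and "prob_space.indep_vars M (\<lambda>_. borel) X {1..}"
    and "\<And>i. i \<ge> 1 \<Longrightarrow> distr M borel (X i) = nu_m m"
    and "0 < r" and "r < 1"
    and "\<And>t. t \<in> {-r..r} \<Longrightarrow> \<exists>d. (G_m m has_real_derivative d) (at t) \<and> d < 0"
  shows "AE \<omega> in M. \<exists>N::nat. \<forall>n>N. \<exists>!t. t \<in> C_Q X n \<omega> \<inter> {-r..r}"
proof -
  note iid = assms(1,3,4)
  have \<nu>: "prob_space (nu_m m)" by (rule iid_law_prob_space[OF iid])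
  then interpret \<nu>: prob_space "nu_m m" .
  have "\<exists>K\<ge>0. 3 / 4 < measure (nu_m m) {-K..K}"
    using exists_Icc_measure_gt[OF \<nu>.finite_measure_axioms sets_nu_m, of "3 / 4"] \<nu>.prob_space by simp
  then obtain K where "0 \<le> K" and K: "3 / 4 < measure (nu_m m) {-K..K}" by blast
  define T where "T = 2 * K + 128 * (1 + K\<^sup>2) ^ 3"
  have "1 \<le> (1 + K\<^sup>2) ^ 3" by simp
  then have "r \<le> T" using \<open>r < 1\<close> \<open>0 \<le> K\<close> unfolding T_def by linarith
  have "(\<integral>x. D' (x - t) \<partial>nu_m m) < 0" if "t \<in> {-r..r}" for t
    using assms(7)[OF that] G_m_derivative_eq[OF \<nu>] by blast
  then have near: "AE \<omega> in M. eventually (\<lambda>n. \<forall>t\<in>{-r..r}. sample_mean (\<lambda>x. D' (x - t)) X n \<omega> < 0) sequentially"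
    using abs_D'_le_1 D'_lipschitz
    by (intro AE_eventually_uniform_sample_mean_neg[OF iid, where B=1 and L=6]) (auto simp: D'_def)
  have mass: "AE \<omega> in M. eventually (\<lambda>n. 3 / 4 < sample_mean (indicator {-K..K}) X n \<omega>) sequentially"
    using K by (intro AE_eventually_sample_mean_gt[OF iid, where B=1]) auto
  have signs: "AE \<omega> in M. eventually (\<lambda>n. (\<forall>t\<in>{r..T}. sample_mean (\<lambda>x. D x t) X n \<omega> < 0) \<and>
      (\<forall>t\<in>{-T..-r}. 0 < sample_mean (\<lambda>x. D x t) X n \<omega>)) sequentially"
    using \<open>m > 1/2\<close> \<open>0 < r\<close> by (intro AE_eventually_sample_mean_D_sign[OF iid]) auto
  have T: "2 * K + 128 * (1 + K\<^sup>2) ^ 3 \<le> T" by (simp add: T_def)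
  from near mass signs show ?thesis
  proof eventually_elim
    case (elim \<omega>)
    from elim(1-3) have "eventually (\<lambda>n. \<exists>!t. t \<in> C_Q X n \<omega> \<inter> {-r..r}) sequentially"
      by eventually_elim (intro L_n_unique_minimizer_in_interval[OF \<open>0 < r\<close> \<open>r \<le> T\<close> \<open>0 \<le> K\<close> T]; simp)
    then show ?case
      by (simp add: eventually_at_top_dense)
  qed
qed

end
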